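(* For every integer $n\geq 7$, $\dot{\imath}_{[1,2]}(P_7\Box P_n)=\left\lfloor \frac{5n+3}{3}\right\rfloor$.
   Context: $P_k$ denotes the path on $k$ vertices and $P_m\Box P_n$ the Cartesian product of two paths (the $m\times n$ grid graph). A set $S$ of vertices of a graph $G$ is independent if no two vertices of $S$ are adjacent, and dominating if every vertex not in $S$ has at least one neighbor in $S$. An independent $[1,2]$-set of $G$ is an independent dominating set $S$ such that every vertex $v\in V(G)\setminus S$ has at least one and at most two neighbors in $S$. When $G$ has an independent $[1,2]$-set, $\dot{\imath}_{[1,2]}(G)$ denotes the minimum cardinality of an independent $[1,2]$-set of $G$ (the statement includes the existence of such a set). *)

theory Defs
  imports Main
begin

definition grid_vertices :: "nat \<Rightarrow> nat \<Rightarrow> (nat \<times> nat) set" where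
  "grid_vertices m n = {0..<m} \<times> {0..<n}"

definition grid_adj :: "nat \<Rightarrow> nat \<Rightarrow> nat \<times> nat \<Rightarrow> nat \<times> nat \<Rightarrow> bool" where
  "grid_adj m n u v \<longleftrightarrow> u \<in> grid_vertices m n \<and> v \<in> grid_vertices m n \<and>
     ((fst u = fst v \<and> (snd u + 1 = snd v \<or> snd v + 1 = snd u)) \<or>
      (snd u = snd v \<and> (fst u + 1 = fst v \<or> fst v + 1 = fst u)))"

definition independent_set :: "'a set \<Rightarrow> ('a \<Rightarrow> 'a \<Rightarrow> bool) \<Rightarrow> 'a set \<Rightarrow> bool" where
  "independent_set V adj S \<longleftrightarrow> S \<subseteq> V \<and> (\<forall>x\<in>S. \<forall>y\<in>S. \<not> adj x y)"

definition dominating_set :: "'a set \<Rightarrow> ('a \<Rightarrow> 'a \<Rightarrow> bool) \<Rightarrow> 'a set \<Rightarrow> bool" where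
  "dominating_set V adj S \<longleftrightarrow> S \<subseteq> V \<and> (\<forall>v\<in>V - S. \<exists>u\<in>S. adj v u)"

definition indep_12_set :: "'a set \<Rightarrow> ('a \<Rightarrow> 'a \<Rightarrow> bool) \<Rightarrow> 'a set \<Rightarrow> bool" where
  "indep_12_set V adj S \<longleftrightarrow> independent_set V adj S \<and> dominating_set V adj S \<and>
     (\<forall>v\<in>V - S. 1 \<le> card {u\<in>S. adj v u} \<and> card {u\<in>S. adj v u} \<le> 2)"

definition indep_12_number :: "'a set \<Rightarrow> ('a \<Rightarrow> 'a \<Rightarrow> bool) \<Rightarrow> nat" where
  "indep_12_number V adj = (LEAST k. \<exists>S. indep_12_set V adj S \<and> card S = k)"

end

theory Submission
  imports Defs
begin

(*
  A vertex set of P_m \<box> P_n is stored as its list of n columns, bit vectors of length m. Being an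
  independent [1,2]-set is a condition on each column together with its two neighbours
  (admissible_column), the sequence being padded with an empty column at both ends.

  Lower bound: weigh a column c with 3|c| - 5. A potential on pairs of consecutive columns, found by
  computer search, is at most the weight of the first column after the left padding, increases along
  every admissible triple by at most the weight of the new column, and is at least 1 in front of the
  right padding. Telescoping gives 3|S| - 5n \<ge> 1, i.e. |S| \<ge> \<lceil>(5n+1)/3\<rceil> = \<lfloor>(5n+3)/3\<rfloor>.
  For m = 7 the three properties are checked by evaluation over the 34 independent columns.

  Upper bound: a block of six columns with ten vertices can be repeated between two copies of a fixed
  pair of seam columns; six base patterns, for n = 7, ..., 12, then give sets of size \<lfloor>(5n+3)/3\<rfloor>.
*)

fun successively3 :: "('a \<Rightarrow> 'a \<Rightarrow> 'a \<Rightarrow> bool) \<Rightarrow> 'a list \<Rightarrow> bool" where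
  "successively3 R (a # b # c # xs) \<longleftrightarrow> R a b c \<and> successively3 R (b # c # xs)"
| "successively3 R _ \<longleftrightarrow> True"

lemma successively3_conv_nth:
  "successively3 R xs \<longleftrightarrow> (\<forall>k. k + 2 < length xs \<longrightarrow> R (xs ! k) (xs ! (k + 1)) (xs ! (k + 2)))"
proof (induction R xs rule: successively3.induct)
  case (1 R a b c xs)
  let ?P = "\<lambda>ys. \<forall>k. k + 2 < length ys \<longrightarrow> R (ys ! k) (ys ! (k + 1)) (ys ! (k + 2))"
  have "?P (a # b # c # xs) \<longleftrightarrow> R a b c \<and> ?P (b # c # xs)"
  proof
    assume "?P (a # b # c # xs)"
    then show "R a b c \<and> ?P (b # c # xs)"
      by (auto dest: spec[of _ 0] spec[of _ "Suc _"])
  next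
    assume "R a b c \<and> ?P (b # c # xs)"
    then show "?P (a # b # c # xs)"
      by (auto simp: nth_Cons split: nat.split)
  qed
  with 1 show ?case by simp
qed auto

lemma successively3_append_overlapping:
  "successively3 R (xs @ u # v # ys) \<longleftrightarrow> successively3 R (xs @ [u, v]) \<and> successively3 R (u # v # ys)"
  by (induction R xs rule: successively3.induct) auto

lemma successively3_pump:
  assumes "successively3 R (xs @ u # v # ys)" and block: "successively3 R (u # v # B @ [u, v])"
  shows "successively3 R (xs @ u # v # concat (replicate k (B @ [u, v])) @ ys)"
proof -
  have "successively3 R (u # v # concat (replicate k (B @ [u, v])) @ ys)"
  proof (induction k)
    case 0
    then show ?case
      using assms(1) successively3_append_overlapping[of R xs u v ys] by simp
  next
    case (Suc k)
    let ?ys = "concat (replicate k (B @ [u, v])) @ ys"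
    have "u # v # concat (replicate (Suc k) (B @ [u, v])) @ ys = (u # v # B) @ u # v # ?ys"
      by simp
    then show ?case
      using Suc.IH block successively3_append_overlapping[of R "u # v # B" u v ?ys] by simp
  qed
  then show ?thesis
    using assms(1) successively3_append_overlapping[of R xs u v] by blast
qed

lemma successively3_potential_bound:
  fixes pot :: "'a \<Rightarrow> 'a \<Rightarrow> 'b :: ordered_ab_group_add option"
  assumes "successively3 R (a # b # xs @ [z])" "set (a # b # xs) \<subseteq> A" "pot a b = Some p"
    and step: "\<And>a b c p. a \<in> A \<Longrightarrow> b \<in> A \<Longrightarrow> c \<in> A \<Longrightarrow> R a b c \<Longrightarrow> pot a b = Some p \<Longrightarrow>
      \<exists>q. pot b c = Some q \<and> q \<le> p + w c"
    and final: "\<And>a b p. a \<in> A \<Longrightarrow> b \<in> A \<Longrightarrow> R a b z \<Longrightarrow> pot a b = Some p \<Longrightarrow> e \<le> p"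
  shows "e \<le> p + sum_list (map w xs)"
  using assms(1-3)
proof (induction xs arbitrary: a b p)
  case Nil
  then show ?case using final by auto
next
  case (Cons c xs)
  obtain q where "pot b c = Some q" "q \<le> p + w c"
    using step[of a b c p] Cons.prems by auto
  with Cons.IH[of b c q] Cons.prems have "e \<le> q + sum_list (map w xs)" by auto
  also have "q + sum_list (map w xs) \<le> p + (w c + sum_list (map w xs))"
    using add_right_mono[OF \<open>q \<le> p + w c\<close>] by (simp only: add.assoc)
  finally show ?case by simp
qed

lemma card_grid_neighbours:
  assumes "S \<subseteq> grid_vertices m n" "i < m" "j < n"
  shows "card {u\<in>S. grid_adj m n (i, j) u} =
    of_bool (0 < j \<and> (i, j - 1) \<in> S) + of_bool ((i, j + 1) \<in> S) +
    of_bool (0 < i \<and> (i - 1, j) \<in> S) + of_bool ((i + 1, j) \<in> S)"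
proof -
  let ?A = "{u. u = (i, j - 1) \<and> 0 < j \<and> (i, j - 1) \<in> S}"
  let ?B = "{u. u = (i, j + 1) \<and> (i, j + 1) \<in> S}"
  let ?C = "{u. u = (i - 1, j) \<and> 0 < i \<and> (i - 1, j) \<in> S}"
  let ?D = "{u. u = (i + 1, j) \<and> (i + 1, j) \<in> S}"
  have single: "card {u. u = x \<and> P} = of_bool P" for x :: "nat \<times> nat" and P
    by (cases P) auto
  have "{u\<in>S. grid_adj m n (i, j) u} = ?A \<union> ?B \<union> ?C \<union> ?D"
  proof (intro set_eqI)
    fix u :: "nat \<times> nat"
    obtain a b where u: "u = (a, b)" by (cases u)
    have "grid_adj m n (i, j) (a, b) \<longleftrightarrow> (a, b) \<in> grid_vertices m n \<and>
        (a = i \<and> (b = j + 1 \<or> b + 1 = j) \<or> b = j \<and> (a = i + 1 \<or> a + 1 = i))"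
      using assms(2,3) by (auto simp: grid_adj_def grid_vertices_def)
    then show "u \<in> {u\<in>S. grid_adj m n (i, j) u} \<longleftrightarrow> u \<in> ?A \<union> ?B \<union> ?C \<union> ?D"
      using assms(1) unfolding u by fastforce
  qed
  moreover have "card (?A \<union> ?B \<union> ?C \<union> ?D) = card ?A + card ?B + card ?C + card ?D"
    by (subst card_Un_disjoint, simp, simp, force)+ simp
  ultimately show ?thesis
    by (simp only: single)
qed

lemma grid_independent_iff:
  assumes "S \<subseteq> grid_vertices m n"
  shows "independent_set (grid_vertices m n) (grid_adj m n) S \<longleftrightarrow>
    (\<forall>(i, j)\<in>S. (i + 1, j) \<notin> S \<and> (i, j + 1) \<notin> S)"
proof -
  have adj: "grid_adj m n (a, b) (c, d) \<longleftrightarrow>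
      (c, d) = (a + 1, b) \<or> (c, d) = (a, b + 1) \<or> (a, b) = (c + 1, d) \<or> (a, b) = (c, d + 1)"
    if "(a, b) \<in> S" "(c, d) \<in> S" for a b c d
    using that assms unfolding grid_adj_def by auto
  show ?thesis
    unfolding independent_set_def
  proof (intro iffI conjI assms)
    assume "S \<subseteq> grid_vertices m n \<and> (\<forall>x\<in>S. \<forall>y\<in>S. \<not> grid_adj m n x y)"
    then show "\<forall>(i, j)\<in>S. (i + 1, j) \<notin> S \<and> (i, j + 1) \<notin> S"
      using adj by blast
  next
    assume "\<forall>(i, j)\<in>S. (i + 1, j) \<notin> S \<and> (i, j + 1) \<notin> S"
    then show "\<forall>x\<in>S. \<forall>y\<in>S. \<not> grid_adj m n x y"
      using adj by fastforce
  qed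
qed

lemma indep_12_set_grid_iff:
  assumes "S \<subseteq> grid_vertices m n"
  shows "indep_12_set (grid_vertices m n) (grid_adj m n) S \<longleftrightarrow>
    (\<forall>j<n. \<forall>i<m. if (i, j) \<in> S then (i + 1, j) \<notin> S \<and> (i, j + 1) \<notin> S
      else card {u\<in>S. grid_adj m n (i, j) u} \<in> {1, 2})"
proof -
  let ?N = "\<lambda>v. card {u\<in>S. grid_adj m n v u}"
  have "dominating_set (grid_vertices m n) (grid_adj m n) S"
    if count: "\<forall>v\<in>grid_vertices m n - S. ?N v \<in> {1, 2}"
  proof -
    have "{u\<in>S. grid_adj m n v u} \<noteq> {}" if "v \<in> grid_vertices m n - S" for v
      using count that by (metis card.empty empty_iff insert_iff zero_neq_numeral zero_neq_one)
    then show ?thesis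
      using assms unfolding dominating_set_def by blast
  qed
  moreover have "(1 \<le> k \<and> k \<le> 2) \<longleftrightarrow> k \<in> {1, 2}" for k :: nat
    by auto
  ultimately have "indep_12_set (grid_vertices m n) (grid_adj m n) S \<longleftrightarrow>
      (\<forall>(i, j)\<in>S. (i + 1, j) \<notin> S \<and> (i, j + 1) \<notin> S) \<and> (\<forall>v\<in>grid_vertices m n - S. ?N v \<in> {1, 2})"
    using grid_independent_iff[OF assms] unfolding indep_12_set_def by auto
  also have "\<dots> \<longleftrightarrow> (\<forall>j<n. \<forall>i<m. if (i, j) \<in> S then (i + 1, j) \<notin> S \<and> (i, j + 1) \<notin> S
      else ?N (i, j) \<in> {1, 2})"
  proof -
    have "(\<forall>(i, j)\<in>S. P i j) \<and> (\<forall>v\<in>grid_vertices m n - S. Q v) \<longleftrightarrow>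
        (\<forall>j<n. \<forall>i<m. if (i, j) \<in> S then P i j else Q (i, j))" for P Q
      using assms by (auto simp: grid_vertices_def)
    then show ?thesis .
  qed
  finally show ?thesis .
qed

lemma indep_12_number_eqI:
  assumes "indep_12_set V adj S" "card S = k" "\<And>S'. indep_12_set V adj S' \<Longrightarrow> k \<le> card S'"
  shows "indep_12_number V adj = k"
  unfolding indep_12_number_def using assms by (blast intro: Least_equality)

definition cells :: "nat \<Rightarrow> bool list list \<Rightarrow> (nat \<times> nat) set" where
  "cells m cs = {(i, j). j < length cs \<and> i < m \<and> cs ! j ! i}"

definition columns :: "nat \<Rightarrow> nat \<Rightarrow> (nat \<times> nat) set \<Rightarrow> bool list list" where
  "columns m n S = map (\<lambda>j. map (\<lambda>i. (i, j) \<in> S) [0..<m]) [0..<n]"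

lemma length_columns [simp]: "length (columns m n S) = n"
  by (simp add: columns_def)

lemma length_in_columns: "c \<in> set (columns m n S) \<Longrightarrow> length c = m"
  by (auto simp: columns_def)

lemma cells_columns: "S \<subseteq> grid_vertices m n \<Longrightarrow> cells m (columns m n S) = S"
  by (auto simp: columns_def cells_def grid_vertices_def)

lemma cells_subset_grid: "cells m cs \<subseteq> grid_vertices m (length cs)"
  by (auto simp: cells_def grid_vertices_def)

lemma card_cells:
  assumes "\<forall>c\<in>set cs. length c = m"
  shows "card (cells m cs) = (\<Sum>c\<leftarrow>cs. count_list c True)"
proof -
  have "cells m cs = (\<Union>j<length cs. (\<lambda>i. (i, j)) ` {i. i < length (cs ! j) \<and> cs ! j ! i})"
    using assms by (auto simp: cells_def)
  also have "card \<dots> = (\<Sum>j<length cs. card ((\<lambda>i. (i, j)) ` {i. i < length (cs ! j) \<and> cs ! j ! i}))"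
    by (rule card_UN_disjoint) auto
  also have "\<dots> = (\<Sum>j<length cs. card {i. i < length (cs ! j) \<and> cs ! j ! i})"
    by (simp add: card_image inj_on_def)
  also have "\<dots> = (\<Sum>c\<leftarrow>cs. count_list c True)"
    by (simp add: sum_list_sum_nth atLeast0LessThan count_list_eq_length_filter
        length_filter_conv_card eq_commute[of True])
  finally show ?thesis .
qed

text \<open>Independence between \<open>a\<close> and \<open>b\<close> is checked at the triple in which \<open>a\<close> is the middle column.\<close>

definition admissible_column :: "bool list \<Rightarrow> bool list \<Rightarrow> bool list \<Rightarrow> bool" where
  "admissible_column a b c \<longleftrightarrow> length a = length b \<and> length c = length b \<and>
    (\<forall>i<length b. if b ! i then \<not> (i + 1 < length b \<and> b ! (i + 1)) \<and> \<not> c ! i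
      else of_bool (a ! i) + of_bool (c ! i) + of_bool (0 < i \<and> b ! (i - 1)) +
        of_bool (i + 1 < length b \<and> b ! (i + 1)) \<in> {1, 2::nat})"

lemma nth_padded_columns:
  assumes "j < length cs + 2" "i < m"
  shows "(replicate m False # cs @ [replicate m False]) ! j ! i \<longleftrightarrow> 0 < j \<and> (i, j - 1) \<in> cells m cs"
  using assms by (auto simp: cells_def nth_Cons nth_append split: nat.split)

lemma admissible_column_padded_iff:
  assumes lengths: "\<forall>c\<in>set cs. length c = m" and k: "k < length cs"
  defines "P \<equiv> replicate m False # cs @ [replicate m False]" and "C \<equiv> cells m cs"
  shows "admissible_column (P ! k) (P ! (k + 1)) (P ! (k + 2)) \<longleftrightarrow>
    (\<forall>i<m. if (i, k) \<in> C then (i + 1, k) \<notin> C \<and> (i, k + 1) \<notin> C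
      else card {u\<in>C. grid_adj m (length cs) (i, k) u} \<in> {1, 2})"
proof -
  have nth_P: "P ! j ! i \<longleftrightarrow> 0 < j \<and> (i, j - 1) \<in> C" if "j < length cs + 2" "i < m" for i j
    using that unfolding P_def C_def by (rule nth_padded_columns)
  have above: "(i + 1 < m \<and> P ! (k + 1) ! (i + 1)) \<longleftrightarrow> (i + 1, k) \<in> C" for i
    using nth_P[of "k + 1" "i + 1"] k by (auto simp: C_def cells_def)
  have below: "(0 < i \<and> P ! (k + 1) ! (i - 1)) \<longleftrightarrow> (0 < i \<and> (i - 1, k) \<in> C)" if "i < m" for i
    using nth_P[of "k + 1" "i - 1"] k that by auto
  have "length (P ! j) = m" if "j < length cs + 2" for j
    using lengths that by (auto simp: P_def nth_Cons nth_append split: nat.split)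
  then have lengths_P: "length (P ! k) = m" "length (P ! (k + 1)) = m" "length (P ! (k + 2)) = m"
    using k by simp_all
  have pointwise: "(if P ! (k + 1) ! i then \<not> (i + 1 < m \<and> P ! (k + 1) ! (i + 1)) \<and> \<not> P ! (k + 2) ! i
      else of_bool (P ! k ! i) + of_bool (P ! (k + 2) ! i) + of_bool (0 < i \<and> P ! (k + 1) ! (i - 1)) +
        of_bool (i + 1 < m \<and> P ! (k + 1) ! (i + 1)) \<in> {1, 2::nat}) \<longleftrightarrow>
    (if (i, k) \<in> C then (i + 1, k) \<notin> C \<and> (i, k + 1) \<notin> C
      else card {u\<in>C. grid_adj m (length cs) (i, k) u} \<in> {1, 2})" if "i < m" for i
    using card_grid_neighbours[OF cells_subset_grid that k, folded C_def] k that
    by (simp only: above below nth_P) simp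
  show ?thesis
    unfolding admissible_column_def lengths_P using pointwise by blast
qed

lemma indep_12_set_cells_iff:
  assumes "\<forall>c\<in>set cs. length c = m"
  shows "indep_12_set (grid_vertices m (length cs)) (grid_adj m (length cs)) (cells m cs) \<longleftrightarrow>
    successively3 admissible_column (replicate m False # cs @ [replicate m False])"
proof -
  let ?n = "length cs" and ?C = "cells m cs"
  let ?N = "\<lambda>v. card {u\<in>?C. grid_adj m ?n v u}"
  have "successively3 admissible_column (replicate m False # cs @ [replicate m False]) \<longleftrightarrow>
      (\<forall>k<?n. \<forall>i<m. if (i, k) \<in> ?C then (i + 1, k) \<notin> ?C \<and> (i, k + 1) \<notin> ?C else ?N (i, k) \<in> {1, 2})"
    using admissible_column_padded_iff[OF assms] by (simp add: successively3_conv_nth)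
  also have "\<dots> \<longleftrightarrow> indep_12_set (grid_vertices m ?n) (grid_adj m ?n) ?C"
    using indep_12_set_grid_iff[OF cells_subset_grid] by simp
  finally show ?thesis ..
qed

definition independent_columns :: "nat \<Rightarrow> bool list list" where
  "independent_columns m = filter (successively (\<lambda>x y. \<not> (x \<and> y))) (List.n_lists m [True, False])"

datatype 'a bintrie = Leaf 'a | Node "'a bintrie" "'a bintrie"

fun lookup :: "'a option bintrie \<Rightarrow> bool list \<Rightarrow> 'a option" where
  "lookup (Leaf x) _ = x"
| "lookup (Node l r) [] = None"
| "lookup (Node l r) (b # bs) = lookup (if b then l else r) bs"

text \<open>Keys are the two columns concatenated, \<open>True\<close> selecting the left subtree; \<open>None\<close> marks
  pairs that cannot occur consecutively.\<close>

definition potential_trie :: "int option bintrie" where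
  "potential_trie = Node (Node (Leaf None) (Node (Node (Leaf None) (Node (Node (Leaf None) (Node (Node (Leaf None) (Node (Leaf None) (Node (Leaf None) (Node (Leaf None) (Node (Leaf None) (Node (Leaf None) (Node (Leaf None) (Leaf (Some (1)))))))))) (Node (Leaf None) (Node (Leaf None) (Node (Leaf None) (Node (Leaf None) (Node (Leaf None) (Node (Node (Leaf None) (Leaf (Some (2)))) (Node (Leaf (Some (2))) (Leaf (Some (-1)))))))))))) (Node (Node (Leaf None) (Node (Leaf None) (Node (Leaf None) (Node (Leaf None) (Node (Node (Leaf None) (Node (Leaf None) (Node (Leaf (Some (4))) (Leaf (Some (1)))))) (Node (Node (Leaf None) (Node (Leaf (Some (5))) (Leaf (Some (2))))) (Node (Leaf None) (Node (Leaf (Some (1))) (Leaf (Some (-2))))))))))) (Node (Node (Leaf None) (Node (Leaf None) (Node (Leaf None) (Node (Node (Leaf None) (Node (Node (Leaf None) (Leaf (Some (4)))) (Node (Leaf None) (Leaf (Some (1)))))) (Node (Node (Leaf None) (Node (Leaf None) (Leaf (Some (1))))) (Node (Node (Leaf None) (Leaf (Some (1)))) (Node (Leaf None) (Leaf (Some (-2)))))))))) (Node (Leaf None) (Node (Leaf None) (Node (Leaf None) (Node (Node (Leaf None) (Node (Node (Leaf None) (Leaf (Some (4)))) (Leaf None))) (Node (Node (Leaf None) (Node (Leaf (Some (3))) (Leaf None))) (Node (Node (Leaf None) (Leaf (Some (1)))) (Leaf None))))))))))) (Node (Node (Leaf None) (Node (Node (Leaf None) (Node (Leaf None) (Node (Node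 (Leaf None) (Node (Leaf None) (Node (Leaf None) (Node (Leaf None) (Node (Leaf (Some (5))) (Leaf (Some (2)))))))) (Node (Node (Leaf None) (Node (Leaf None) (Node (Leaf None) (Node (Leaf (Some (5))) (Leaf (Some (2))))))) (Node (Leaf None) (Node (Leaf None) (Node (Leaf None) (Node (Leaf (Some (2))) (Leaf (Some (-1))))))))))) (Node (Node (Leaf None) (Node (Node (Leaf None) (Node (Leaf None) (Node (Node (Leaf None) (Node (Leaf None) (Leaf (Some (5))))) (Node (Node (Leaf None) (Leaf (Some (5)))) (Node (Leaf None) (Leaf (Some (2)))))))) (Node (Node (Leaf None) (Node (Node (Leaf None) (Node (Leaf None) (Leaf (Some (5))))) (Node (Node (Leaf None) (Leaf (Some (5)))) (Node (Leaf None) (Leaf (Some (2))))))) (Node (Leaf None) (Node (Node (Leaf None) (Node (Leaf None) (Leaf (Some (2))))) (Node (Node (Leaf None) (Leaf (Some (2)))) (Node (Leaf None) (Leaf (Some (-1)))))))))) (Node (Leaf None) (Node (Node (Leaf None) (Node (Leaf None) (Node (Node (Leaf None) (Node (Leaf (Some (6))) (Leaf None))) (Node (Node (Leaf None) (Leaf (Some (4)))) (Node (Leaf (Some (3))) (Leaf None)))))) (Node (Node (Leaf None) (Node (Node (Leaf None) (Node (Leaf (Some (6))) (Leaf None))) (Node (Node (Leaf None) (Leaf (Some (4)))) (Node (Leaf (Some (3))) (Leaf None))))) (Node (Leaf None) (Node (Node (Leaf None) (Node (Leaf (Some (3))) (Leaf None))) (Node (Node (Leaf None) (Leaf (Some (1))))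 (Node (Leaf (Some (0))) (Leaf None))))))))))) (Node (Node (Leaf None) (Node (Node (Leaf None) (Node (Node (Leaf None) (Node (Node (Leaf None) (Node (Leaf None) (Node (Leaf None) (Leaf (Some (4)))))) (Node (Leaf None) (Node (Leaf None) (Node (Leaf None) (Leaf (Some (1)))))))) (Node (Node (Leaf None) (Node (Leaf None) (Node (Leaf None) (Node (Leaf None) (Leaf (Some (1))))))) (Node (Node (Leaf None) (Node (Leaf None) (Node (Leaf None) (Leaf (Some (1)))))) (Node (Leaf None) (Node (Leaf None) (Node (Leaf None) (Leaf (Some (-2)))))))))) (Node (Leaf None) (Node (Node (Leaf None) (Node (Node (Leaf None) (Node (Node (Leaf None) (Leaf (Some (6)))) (Node (Leaf (Some (6))) (Leaf (Some (3)))))) (Node (Leaf None) (Node (Node (Leaf None) (Leaf (Some (3)))) (Node (Leaf (Some (3))) (Leaf (Some (0)))))))) (Node (Node (Leaf None) (Node (Leaf None) (Node (Node (Leaf None) (Leaf (Some (3)))) (Node (Leaf (Some (2))) (Leaf (Some (0))))))) (Node (Node (Leaf None) (Node (Node (Leaf None) (Leaf (Some (3)))) (Node (Leaf (Some (3))) (Leaf (Some (0)))))) (Node (Leaf None) (Node (Node (Leaf None) (Leaf (Some (0)))) (Node (Leaf (Some (0))) (Leaf (Some (-3)))))))))))) (Node (Node (Leaf None) (Node (Leaf None) (Node (Node (Leaf None) (Node (Node (Leaf None) (Node (Leaf None) (Node (Leaf (Some (6))) (Leaf (Some (3)))))) (Leaf None))) (Node (Node (Leaf None) (Node (Node (Leaf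 None) (Node (Leaf (Some (5))) (Leaf (Some (2))))) (Node (Leaf None) (Node (Leaf (Some (2))) (Leaf (Some (-1))))))) (Node (Node (Leaf None) (Node (Leaf None) (Node (Leaf (Some (3))) (Leaf (Some (0)))))) (Leaf None)))))) (Node (Node (Leaf None) (Node (Node (Leaf None) (Node (Node (Leaf None) (Node (Node (Leaf None) (Leaf (Some (6)))) (Node (Leaf None) (Leaf (Some (3)))))) (Leaf None))) (Node (Node (Leaf None) (Node (Node (Leaf None) (Node (Leaf None) (Leaf (Some (1))))) (Leaf None))) (Node (Node (Leaf None) (Node (Node (Leaf None) (Leaf (Some (3)))) (Node (Leaf None) (Leaf (Some (0)))))) (Leaf None))))) (Node (Leaf None) (Node (Node (Leaf None) (Node (Node (Leaf None) (Node (Node (Leaf None) (Leaf (Some (6)))) (Leaf None))) (Leaf None))) (Node (Node (Leaf None) (Node (Node (Leaf None) (Node (Leaf (Some (4))) (Leaf None))) (Leaf None))) (Node (Node (Leaf None) (Node (Node (Leaf None) (Leaf (Some (3)))) (Leaf None))) (Leaf None))))))))))) (Node (Node (Leaf None) (Node (Node (Leaf None) (Node (Node (Leaf None) (Node (Node (Leaf None) (Node (Leaf None) (Node (Leaf None) (Node (Leaf None) (Node (Leaf None) (Node (Leaf (Some (5))) (Leaf (Some (2))))))))) (Node (Leaf None) (Node (Leaf None) (Node (Leaf None) (Node (Leaf None) (Node (Leaf None) (Node (Leaf (Some (2))) (Leaf (Some (-1))))))))))) (Node (Node (Node (Leaf None) (Node (Leaf None) (Node (Leaf None) (Node (Node (Leaf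 None) (Node (Leaf None) (Leaf (Some (5))))) (Node (Node (Leaf None) (Leaf (Some (5)))) (Node (Leaf None) (Leaf (Some (2))))))))) (Node (Leaf None) (Node (Leaf None) (Node (Leaf None) (Node (Node (Leaf None) (Node (Leaf None) (Leaf (Some (2))))) (Node (Node (Leaf None) (Leaf (Some (2)))) (Node (Leaf None) (Leaf (Some (-1)))))))))) (Node (Node (Leaf None) (Node (Leaf None) (Node (Leaf None) (Node (Node (Leaf None) (Node (Leaf (Some (6))) (Leaf None))) (Node (Node (Leaf None) (Leaf (Some (4)))) (Node (Leaf (Some (3))) (Leaf None))))))) (Node (Leaf None) (Node (Leaf None) (Node (Leaf None) (Node (Node (Leaf None) (Node (Leaf (Some (3))) (Leaf None))) (Node (Node (Leaf None) (Leaf (Some (1)))) (Node (Leaf (Some (0))) (Leaf None))))))))))) (Node (Node (Leaf None) (Node (Node (Node (Leaf None) (Node (Node (Leaf None) (Node (Leaf None) (Node (Leaf None) (Node (Leaf None) (Leaf (Some (5))))))) (Node (Node (Leaf None) (Node (Leaf None) (Node (Leaf None) (Leaf (Some (4)))))) (Node (Leaf None) (Node (Leaf None) (Node (Leaf None) (Leaf (Some (1))))))))) (Node (Leaf None) (Node (Node (Leaf None) (Node (Leaf None) (Node (Leaf None) (Node (Leaf None) (Leaf (Some (2))))))) (Node (Node (Leaf None) (Node (Leaf None) (Node (Leaf None) (Leaf (Some (1)))))) (Node (Leaf None) (Node (Leaf None) (Node (Leaf None) (Leaf (Some (-2)))))))))) (Node (Node (Leaf None) (Node (Node (Leaf None)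 (Node (Leaf None) (Node (Node (Leaf None) (Leaf (Some (8)))) (Node (Leaf (Some (5))) (Leaf (Some (5))))))) (Node (Node (Leaf None) (Node (Node (Leaf None) (Leaf (Some (7)))) (Node (Leaf (Some (5))) (Leaf (Some (4)))))) (Node (Leaf None) (Node (Node (Leaf None) (Leaf (Some (4)))) (Node (Leaf (Some (2))) (Leaf (Some (1))))))))) (Node (Leaf None) (Node (Node (Leaf None) (Node (Leaf None) (Node (Node (Leaf None) (Leaf (Some (5)))) (Node (Leaf (Some (2))) (Leaf (Some (2))))))) (Node (Node (Leaf None) (Node (Node (Leaf None) (Leaf (Some (4)))) (Node (Leaf (Some (2))) (Leaf (Some (1)))))) (Node (Leaf None) (Node (Node (Leaf None) (Leaf (Some (1)))) (Node (Leaf (Some (-1))) (Leaf (Some (-2)))))))))))) (Node (Node (Leaf None) (Node (Node (Leaf None) (Node (Node (Leaf None) (Node (Node (Leaf None) (Node (Leaf (Some (8))) (Leaf (Some (5))))) (Node (Leaf None) (Node (Leaf (Some (5))) (Leaf (Some (2))))))) (Node (Node (Leaf None) (Node (Leaf None) (Node (Leaf (Some (5))) (Leaf (Some (2)))))) (Node (Node (Leaf None) (Node (Leaf (Some (5))) (Leaf (Some (2))))) (Node (Leaf None) (Node (Leaf (Some (2))) (Leaf (Some (-1))))))))) (Node (Leaf None) (Node (Node (Leaf None) (Node (Node (Leaf None) (Node (Leaf (Some (5))) (Leaf (Some (2))))) (Node (Leaf None) (Node (Leaf (Some (2))) (Leaf (Some (-1))))))) (Node (Node (Leaf None) (Node (Leaf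 None) (Node (Leaf (Some (2))) (Leaf (Some (-1)))))) (Node (Node (Leaf None) (Node (Leaf (Some (2))) (Leaf (Some (-1))))) (Node (Leaf None) (Node (Leaf (Some (-1))) (Leaf (Some (-4))))))))))) (Node (Node (Node (Leaf None) (Node (Node (Leaf None) (Node (Node (Leaf None) (Node (Leaf None) (Leaf (Some (5))))) (Leaf None))) (Node (Node (Leaf None) (Node (Node (Leaf None) (Leaf (Some (6)))) (Node (Leaf None) (Leaf (Some (3)))))) (Node (Node (Leaf None) (Node (Leaf None) (Leaf (Some (2))))) (Leaf None))))) (Node (Leaf None) (Node (Node (Leaf None) (Node (Node (Leaf None) (Node (Leaf None) (Leaf (Some (2))))) (Leaf None))) (Node (Node (Leaf None) (Node (Node (Leaf None) (Leaf (Some (3)))) (Node (Leaf None) (Leaf (Some (0)))))) (Node (Node (Leaf None) (Node (Leaf None) (Leaf (Some (-1))))) (Leaf None)))))) (Node (Node (Leaf None) (Node (Node (Leaf None) (Node (Node (Leaf None) (Node (Leaf (Some (8))) (Leaf None))) (Leaf None))) (Node (Node (Leaf None) (Node (Node (Leaf None) (Leaf (Some (5)))) (Leaf None))) (Node (Node (Leaf None) (Node (Leaf (Some (5))) (Leaf None))) (Leaf None))))) (Node (Leaf None) (Node (Node (Leaf None) (Node (Node (Leaf None) (Node (Leaf (Some (5))) (Leaf None))) (Leaf None))) (Node (Node (Leaf None) (Node (Node (Leaf None) (Leaf (Some (2)))) (Leaf None))) (Node (Node (Leaf None) (Node (Leaf (Some (2))) (Leaf None))) (Leaf None)))))))))))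 (Node (Node (Leaf None) (Node (Node (Leaf None) (Node (Node (Node (Leaf None) (Node (Leaf None) (Node (Leaf None) (Node (Leaf None) (Node (Leaf None) (Node (Leaf None) (Leaf (Some (2))))))))) (Node (Node (Leaf None) (Node (Leaf None) (Node (Leaf None) (Node (Leaf None) (Node (Leaf None) (Leaf (Some (2)))))))) (Node (Leaf None) (Node (Leaf None) (Node (Leaf None) (Node (Leaf None) (Node (Leaf None) (Leaf (Some (-1)))))))))) (Node (Node (Leaf None) (Node (Leaf None) (Node (Leaf None) (Node (Leaf None) (Node (Node (Leaf None) (Leaf (Some (2)))) (Node (Leaf (Some (2))) (Leaf (Some (-1))))))))) (Node (Node (Leaf None) (Node (Leaf None) (Node (Leaf None) (Node (Node (Leaf None) (Leaf (Some (2)))) (Node (Leaf (Some (2))) (Leaf (Some (-1)))))))) (Node (Leaf None) (Node (Leaf None) (Node (Leaf None) (Node (Node (Leaf None) (Leaf (Some (-1)))) (Node (Leaf (Some (-1))) (Leaf (Some (-4)))))))))))) (Node (Node (Leaf None) (Node (Node (Leaf None) (Node (Leaf None) (Node (Node (Leaf None) (Node (Leaf None) (Node (Leaf (Some (5))) (Leaf (Some (2)))))) (Node (Node (Leaf None) (Node (Leaf (Some (5))) (Leaf (Some (2))))) (Node (Leaf None) (Node (Leaf (Some (2))) (Leaf (Some (-1))))))))) (Node (Node (Leaf None) (Node (Node (Leaf None) (Node (Leaf None) (Node (Leaf (Some (7))) (Leaf (Some (4)))))) (Node (Node (Leaf None) (Node (Leaf (Some (8))) (Leaf (Some (5)))))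 (Node (Leaf None) (Node (Leaf (Some (4))) (Leaf (Some (1)))))))) (Node (Leaf None) (Node (Node (Leaf None) (Node (Leaf None) (Node (Leaf (Some (4))) (Leaf (Some (1)))))) (Node (Node (Leaf None) (Node (Leaf (Some (5))) (Leaf (Some (2))))) (Node (Leaf None) (Node (Leaf (Some (1))) (Leaf (Some (-2))))))))))) (Node (Node (Node (Leaf None) (Node (Leaf None) (Node (Node (Leaf None) (Node (Node (Leaf None) (Leaf (Some (6)))) (Node (Leaf None) (Leaf (Some (3)))))) (Node (Node (Leaf None) (Node (Leaf None) (Leaf (Some (2))))) (Node (Node (Leaf None) (Leaf (Some (3)))) (Node (Leaf None) (Leaf (Some (0))))))))) (Node (Node (Leaf None) (Node (Node (Leaf None) (Node (Node (Leaf None) (Leaf (Some (6)))) (Node (Leaf None) (Leaf (Some (3)))))) (Node (Node (Leaf None) (Node (Leaf None) (Leaf (Some (3))))) (Node (Node (Leaf None) (Leaf (Some (3)))) (Node (Leaf None) (Leaf (Some (0)))))))) (Node (Leaf None) (Node (Node (Leaf None) (Node (Node (Leaf None) (Leaf (Some (3)))) (Node (Leaf None) (Leaf (Some (0)))))) (Node (Node (Leaf None) (Node (Leaf None) (Leaf (Some (0))))) (Node (Node (Leaf None) (Leaf (Some (0)))) (Node (Leaf None) (Leaf (Some (-3)))))))))) (Node (Node (Leaf None) (Node (Leaf None) (Node (Node (Leaf None) (Node (Node (Leaf None) (Leaf (Some (5)))) (Leaf None))) (Node (Node (Leaf None) (Node (Leaf (Some (3))) (Leaf None))) (Node (Node (Leaf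 None) (Leaf (Some (2)))) (Leaf None)))))) (Node (Node (Leaf None) (Node (Node (Leaf None) (Node (Node (Leaf None) (Leaf (Some (5)))) (Leaf None))) (Node (Node (Leaf None) (Node (Leaf (Some (3))) (Leaf None))) (Node (Node (Leaf None) (Leaf (Some (2)))) (Leaf None))))) (Node (Leaf None) (Node (Node (Leaf None) (Node (Node (Leaf None) (Leaf (Some (2)))) (Leaf None))) (Node (Node (Leaf None) (Node (Leaf (Some (0))) (Leaf None))) (Node (Node (Leaf None) (Leaf (Some (-1)))) (Leaf None))))))))))) (Node (Node (Leaf None) (Node (Node (Leaf None) (Node (Node (Leaf None) (Node (Node (Leaf None) (Node (Leaf None) (Node (Leaf None) (Node (Leaf (Some (6))) (Leaf (Some (3))))))) (Node (Leaf None) (Node (Leaf None) (Node (Leaf None) (Node (Leaf (Some (3))) (Leaf (Some (0))))))))) (Node (Node (Leaf None) (Node (Leaf None) (Node (Leaf None) (Node (Leaf None) (Node (Leaf (Some (4))) (Leaf (Some (1)))))))) (Leaf None)))) (Node (Node (Node (Leaf None) (Node (Node (Leaf None) (Node (Node (Leaf None) (Node (Leaf None) (Leaf (Some (6))))) (Node (Node (Leaf None) (Leaf (Some (6)))) (Node (Leaf None) (Leaf (Some (3))))))) (Node (Leaf None) (Node (Node (Leaf None) (Node (Leaf None) (Leaf (Some (3))))) (Node (Node (Leaf None) (Leaf (Some (3)))) (Node (Leaf None) (Leaf (Some (0))))))))) (Node (Node (Leaf None) (Node (Leaf None) (Node (Node (Leaf None) (Node (Leaf None) (Leaf (Some (4)))))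 (Node (Node (Leaf None) (Leaf (Some (4)))) (Node (Leaf None) (Leaf (Some (1)))))))) (Leaf None))) (Node (Node (Leaf None) (Node (Node (Leaf None) (Node (Node (Leaf None) (Node (Leaf (Some (6))) (Leaf None))) (Node (Node (Leaf None) (Leaf (Some (4)))) (Node (Leaf (Some (3))) (Leaf None))))) (Node (Leaf None) (Node (Node (Leaf None) (Node (Leaf (Some (3))) (Leaf None))) (Node (Node (Leaf None) (Leaf (Some (1)))) (Node (Leaf (Some (0))) (Leaf None))))))) (Node (Node (Leaf None) (Node (Leaf None) (Node (Node (Leaf None) (Node (Leaf (Some (4))) (Leaf None))) (Node (Node (Leaf None) (Leaf (Some (1)))) (Node (Leaf (Some (1))) (Leaf None)))))) (Leaf None)))))) (Node (Node (Leaf None) (Node (Node (Node (Leaf None) (Node (Node (Leaf None) (Node (Leaf None) (Node (Leaf None) (Node (Leaf None) (Leaf (Some (3))))))) (Leaf None))) (Node (Node (Leaf None) (Node (Node (Leaf None) (Node (Leaf None) (Node (Leaf None) (Leaf (Some (4)))))) (Node (Leaf None) (Node (Leaf None) (Node (Leaf None) (Leaf (Some (1)))))))) (Leaf None))) (Node (Node (Leaf None) (Node (Node (Leaf None) (Node (Leaf None) (Node (Node (Leaf None) (Leaf (Some (3)))) (Node (Leaf (Some (3))) (Leaf (Some (0))))))) (Leaf None))) (Node (Node (Leaf None) (Node (Node (Leaf None) (Node (Node (Leaf None) (Leaf (Some (5)))) (Node (Leaf (Some (5))) (Leaf (Some (2)))))) (Node (Leaf None) (Node (Node (Leaf None) (Leaf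 (Some (2)))) (Node (Leaf (Some (2))) (Leaf (Some (-1)))))))) (Leaf None))))) (Node (Node (Leaf None) (Node (Node (Leaf None) (Node (Node (Leaf None) (Node (Node (Leaf None) (Node (Leaf (Some (8))) (Leaf (Some (5))))) (Node (Leaf None) (Node (Leaf (Some (5))) (Leaf (Some (2))))))) (Leaf None))) (Node (Node (Leaf None) (Node (Node (Leaf None) (Node (Leaf None) (Node (Leaf (Some (5))) (Leaf (Some (2)))))) (Leaf None))) (Leaf None)))) (Node (Node (Node (Leaf None) (Node (Node (Leaf None) (Node (Node (Leaf None) (Node (Leaf None) (Leaf (Some (4))))) (Leaf None))) (Leaf None))) (Node (Node (Leaf None) (Node (Node (Leaf None) (Node (Node (Leaf None) (Leaf (Some (6)))) (Node (Leaf None) (Leaf (Some (3)))))) (Leaf None))) (Leaf None))) (Node (Node (Leaf None) (Node (Node (Leaf None) (Node (Node (Leaf None) (Node (Leaf (Some (6))) (Leaf (Some (4))))) (Node (Node (Leaf None) (Leaf (Some (4)))) (Node (Leaf (Some (4))) (Leaf (Some (1))))))) (Node (Node (Leaf None) (Node (Node (Leaf None) (Leaf (Some (4)))) (Node (Leaf (Some (4))) (Leaf (Some (1)))))) (Node (Node (Leaf None) (Node (Leaf (Some (4))) (Leaf (Some (1))))) (Node (Node (Leaf None) (Leaf (Some (1)))) (Node (Leaf (Some (1))) (Leaf (Some (-2))))))))) (Node (Node (Leaf None) (Node (Node (Leaf None) (Node (Node (Leaf None) (Leaf (Some (4)))) (Node (Leaf (Some (4))) (Leaf (Some (1)))))) (Node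 (Node (Leaf None) (Node (Leaf (Some (4))) (Leaf (Some (1))))) (Node (Node (Leaf None) (Leaf (Some (1)))) (Node (Leaf (Some (1))) (Leaf (Some (-2)))))))) (Node (Node (Leaf None) (Node (Node (Leaf None) (Node (Leaf (Some (4))) (Leaf (Some (1))))) (Node (Node (Leaf None) (Leaf (Some (1)))) (Node (Leaf (Some (1))) (Leaf (Some (-2))))))) (Node (Node (Leaf None) (Node (Node (Leaf None) (Leaf (Some (1)))) (Node (Leaf (Some (1))) (Leaf (Some (-2)))))) (Node (Node (Leaf None) (Node (Leaf (Some (1))) (Leaf (Some (-2))))) (Node (Node (Leaf None) (Leaf (Some (-2)))) (Node (Leaf (Some (-2))) (Leaf (Some (-5))))))))))))))))"

definition potential :: "bool list \<Rightarrow> bool list \<Rightarrow> int option" where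
  "potential a b = lookup potential_trie (a @ b)"

definition weight :: "bool list \<Rightarrow> int" where
  "weight c = 3 * int (count_list c True) - 5"

lemma admissible_column_independent_columns:
  assumes "admissible_column a b c"
  shows "b \<in> set (independent_columns (length b))"
proof -
  have "\<not> (b ! i \<and> b ! (i + 1))" if "i + 1 < length b" for i
    using assms that unfolding admissible_column_def by (meson add_lessD1)
  then show ?thesis
    by (auto simp: independent_columns_def set_n_lists successively_conv_nth)
qed

lemma successively3_admissible_column_independent_columns:
  assumes "successively3 admissible_column (a # cs @ [z])" "c \<in> set cs"
  shows "c \<in> set (independent_columns (length c))"
proof -
  obtain j where j: "j < length cs" "c = cs ! j"
    using assms(2) by (auto simp: in_set_conv_nth)
  then have "admissible_column ((a # cs @ [z]) ! j) c ((a # cs @ [z]) ! (j + 2))"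
    using assms(1) by (auto simp: successively3_conv_nth nth_append)
  then show ?thesis
    by (rule admissible_column_independent_columns)
qed

lemma sum_list_weight:
  "sum_list (map weight cs) = 3 * int (\<Sum>c\<leftarrow>cs. count_list c True) - 5 * int (length cs)"
  by (induction cs) (simp_all add: weight_def)

lemma potential_step:
  assumes "a \<in> set (independent_columns 7)" "b \<in> set (independent_columns 7)"
    "c \<in> set (independent_columns 7)" "admissible_column a b c" "potential a b = Some p"
  shows "\<exists>q. potential b c = Some q \<and> q \<le> p + weight c"
proof -
  have "\<forall>a\<in>set (independent_columns 7). \<forall>b\<in>set (independent_columns 7).
      case potential a b of None \<Rightarrow> True | Some p \<Rightarrow>
        (\<forall>c\<in>set (independent_columns 7). admissible_column a b c \<longrightarrow>
          (case potential b c of None \<Rightarrow> False | Some q \<Rightarrow> q \<le> p + weight c))"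
    by code_simp
  then show ?thesis
    using assms by (fastforce split: option.splits)
qed

lemma potential_start:
  assumes "b \<in> set (independent_columns 7)"
  shows "\<exists>p. potential (replicate 7 False) b = Some p \<and> p \<le> weight b"
proof -
  have "\<forall>b\<in>set (independent_columns 7).
      case potential (replicate 7 False) b of None \<Rightarrow> False | Some p \<Rightarrow> p \<le> weight b"
    by code_simp
  then show ?thesis
    using assms by (fastforce split: option.splits)
qed

lemma potential_end:
  assumes "a \<in> set (independent_columns 7)" "b \<in> set (independent_columns 7)"
    "admissible_column a b (replicate 7 False)" "potential a b = Some p"
  shows "1 \<le> p"
proof -
  have "\<forall>a\<in>set (independent_columns 7). \<forall>b\<in>set (independent_columns 7).
      case potential a b of None \<Rightarrow> True | Some p \<Rightarrow> admissible_column a b (replicate 7 False) \<longrightarrow> 1 \<le> p"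
    by code_simp
  then show ?thesis
    using assms by fastforce
qed

lemma indep_12_set_grid7_card_ge:
  assumes "indep_12_set (grid_vertices 7 n) (grid_adj 7 n) S" "0 < n"
  shows "5 * n + 1 \<le> 3 * card S"
proof -
  let ?Z = "replicate 7 False" and ?A = "set (independent_columns 7)"
  define cs where "cs = columns 7 n S"
  have lengths: "\<forall>c\<in>set cs. length c = 7" and "length cs = n"
    by (simp_all add: cs_def length_in_columns)
  have S: "cells 7 cs = S"
    using assms(1) by (simp add: cs_def cells_columns indep_12_set_def independent_set_def)
  have chain: "successively3 admissible_column (?Z # cs @ [?Z])"
    using assms(1) indep_12_set_cells_iff[OF lengths] by (simp add: S \<open>length cs = n\<close>)
  then have "set cs \<subseteq> ?A"
    using lengths successively3_admissible_column_independent_columns by fastforce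
  moreover have "?Z \<in> ?A"
    by code_simp
  ultimately have A: "set (?Z # cs) \<subseteq> ?A"
    by simp
  obtain b xs where cs: "cs = b # xs"
    using \<open>length cs = n\<close> assms(2) by (cases cs) auto
  obtain p where p: "potential ?Z b = Some p" "p \<le> weight b"
    using potential_start A cs by auto
  have "1 \<le> p + sum_list (map weight xs)"
    using chain A p(1) potential_step potential_end unfolding cs
    by (intro successively3_potential_bound[where R = admissible_column and z = ?Z and A = ?A
          and pot = potential and w = weight]) auto
  then have "1 \<le> sum_list (map weight cs)"
    using p(2) cs by simp
  also have "sum_list (map weight cs) = 3 * int (card S) - 5 * int n"
    using card_cells[OF lengths] \<open>length cs = n\<close> by (simp add: S sum_list_weight)
  finally show ?thesis
    by linarith
qed

definition column :: "string \<Rightarrow> bool list" where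
  "column = map (\<lambda>x. x = CHR ''#'')"

definition block :: "bool list list" where
  "block = map column [''#.....#'', ''...#...'', ''.#...#.'', ''...#...'']"

definition seam_left :: "bool list" where
  "seam_left = column ''#.....#''"

definition seam_right :: "bool list" where
  "seam_right = column ''..#.#..''"

text \<open>The witness for \<open>n = 7 + r\<close> is \<open>prefixes ! r @ seam_left # seam_right # suffixes ! r\<close>;
  copies of \<open>block @ [seam_left, seam_right]\<close> may be inserted after the seam.\<close>

definition prefixes :: "bool list list list" where
  "prefixes = map (map column)
    [[''..#.#..'', ''#.....#'', ''...#...'', ''.#...#.'', ''...#...''],
     [''.#...#.'', ''...#...'', ''#.#...#'', ''....#..'', ''.#...#.'', ''...#...''],
     [''#...#..'', ''..#...#'', ''.#...#.'', ''...#...''],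
     [''..#.#..'', ''#.....#'', ''...#...'', ''.#...#.'', ''...#...''],
     [''..#.#..'', ''#.....#'', ''...#...'', ''.#...#.'', ''..#....'', ''#...#.#'', ''..#....'',
      ''.#...#.'', ''...#...''],
     [''..#.#..'', ''#.....#'', ''...#...'', ''.#...#.'', ''...#...'']]"

definition suffixes :: "bool list list list" where
  "suffixes = map (map column)
    [[],
     [],
     [''#.....#'', ''...#...'', ''.#...#.''],
     [''#.....#'', ''...#...'', ''.#...#.''],
     [],
     [''#....#.'', ''...#...'', ''.#....#'', ''....#..'', ''#.#..#.'']]"

lemma block_admissible:
  "successively3 admissible_column (seam_left # seam_right # block @ [seam_left, seam_right]) \<and>
   (\<forall>c\<in>set (block @ [seam_left, seam_right]). length c = 7) \<and>
   (\<Sum>c\<leftarrow>block @ [seam_left, seam_right]. count_list c True) = 10"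
  by code_simp

lemma base_patterns_admissible:
  "\<forall>r<6. successively3 admissible_column
      (replicate 7 False # prefixes ! r @ seam_left # seam_right # suffixes ! r @ [replicate 7 False]) \<and>
    (\<forall>c\<in>set (prefixes ! r @ suffixes ! r). length c = 7) \<and>
    length (prefixes ! r) + length (suffixes ! r) = 5 + r \<and>
    (\<Sum>c\<leftarrow>prefixes ! r @ seam_left # seam_right # suffixes ! r. count_list c True) = (5 * (7 + r) + 3) div 3"
  by code_simp

lemma grid7_admissible_columns_exist:
  assumes "7 \<le> n"
  obtains cs where "\<forall>c\<in>set cs. length c = 7" "length cs = n"
    "successively3 admissible_column (replicate 7 False # cs @ [replicate 7 False])"
    "(\<Sum>c\<leftarrow>cs. count_list c True) = (5 * n + 3) div 3"
proof -
  define r where "r = (n - 7) mod 6"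
  define k where "k = (n - 7) div 6"
  let ?P = "block @ [seam_left, seam_right]"
  let ?cs = "prefixes ! r @ seam_left # seam_right # concat (replicate k ?P) @ suffixes ! r"
  have n: "n = 7 + r + 6 * k" and "r < 6"
    using assms by (simp_all add: r_def k_def)
  then have base: "successively3 admissible_column
      (replicate 7 False # prefixes ! r @ seam_left # seam_right # suffixes ! r @ [replicate 7 False])"
    "\<forall>c\<in>set (prefixes ! r @ suffixes ! r). length c = 7"
    "length (prefixes ! r) + length (suffixes ! r) = 5 + r"
    "(\<Sum>c\<leftarrow>prefixes ! r @ seam_left # seam_right # suffixes ! r. count_list c True) = (5 * (7 + r) + 3) div 3"
    using base_patterns_admissible by auto
  have "length (concat (replicate k ?P)) = 6 * k"
    by (induction k) (simp_all add: block_def)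
  moreover have "(\<Sum>c\<leftarrow>concat (replicate k ?P). count_list c True) = 10 * k"
    using block_admissible by (induction k) simp_all
  moreover have "set (concat (replicate k ?P)) \<subseteq> set ?P"
    by auto
  moreover have "(5 * (7 + r) + 3) div 3 + 10 * k = (5 * n + 3) div 3"
    unfolding n by simp
  ultimately show ?thesis
  proof (intro that[of ?cs])
    show "successively3 admissible_column (replicate 7 False # ?cs @ [replicate 7 False])"
      using successively3_pump[of admissible_column "replicate 7 False # prefixes ! r",
          OF _ conjunct1[OF block_admissible]] base(1)
      by simp
  qed (use base(2-4) block_admissible n in auto)
qed

theorem mainTheorem8:
  fixes n :: nat
  assumes "n \<ge> 7"
  shows "(\<exists>S. indep_12_set (grid_vertices 7 n) (grid_adj 7 n) S) \<and>
         indep_12_number (grid_vertices 7 n) (grid_adj 7 n) = (5 * n + 3) div 3"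
proof -
  obtain cs where cs: "\<forall>c\<in>set cs. length c = 7" "length cs = n"
    "successively3 admissible_column (replicate 7 False # cs @ [replicate 7 False])"
    "(\<Sum>c\<leftarrow>cs. count_list c True) = (5 * n + 3) div 3"
    using grid7_admissible_columns_exist assms by blast
  have "indep_12_set (grid_vertices 7 n) (grid_adj 7 n) (cells 7 cs)"
    using indep_12_set_cells_iff[OF cs(1)] cs(2,3) by simp
  moreover have "card (cells 7 cs) = (5 * n + 3) div 3"
    using card_cells[OF cs(1)] cs(4) by simp
  moreover have "(5 * n + 3) div 3 \<le> card S" if "indep_12_set (grid_vertices 7 n) (grid_adj 7 n) S" for S
    using indep_12_set_grid7_card_ge[OF that] assms by simp
  ultimately show ?thesis
    using indep_12_number_eqI by blast
qed

end
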